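(* Suppose $S\tilde DS$ is singular on $S\mathbb C^N$, let $T$ be the orthogonal projection onto $\operatorname{Ker}_{S\mathbb C^N}S\tilde DS$, and suppose $T\tilde D^2T$ is non-singular on $T\mathbb C^N$. Then $\dim T\mathbb C^N=1$ and, as $\lambda\to0$ in $\overline{\mathbb C^+}\setminus\{0\}$, $$\Gamma(\lambda)^{-1}=N\,g(\lambda)\,T[T\tilde D^2T]^{-1}T+O(1),$$ where $[T\tilde D^2T]^{-1}$ is the inverse on $T\mathbb C^N$; in particular $\Gamma(\lambda)^{-1}$ has a logarithmic singularity at $\lambda=0$.
   Context: Fix $N\ge1$, distinct points $y_1,\dots,y_N\in\mathbb R^2$, $\alpha\in\mathbb R^N$. $\mathcal G_\lambda(x)=\frac i4H_0^{(1)}(\lambda|x|)$, $g(\lambda)=-\frac1{2\pi}\log(\lambda/2)+\frac i4-\frac{\gamma}{2\pi}$ ($\gamma$ Euler's constant), $\Gamma(\lambda)$ the $N\times N$ matrix with $\Gamma(\lambda)_{jj}=\alpha_j-g(\lambda)$, $\Gamma(\lambda)_{jk}=-\mathcal G_\lambda(y_j-y_k)$ ($j\ne k$). $P$ is the orthogonal projection onto $\mathbb C(1,\dots,1)^t$, $S=I-P$; $\tilde D$ real symmetric with $\tilde D_{jj}=\alpha_j$, $\tilde D_{jk}=\frac1{2\pi}\log|y_j-y_k|$ ($j\ne k$). $O(1)$ denotes a matrix bounded in norm for small $|\lambda|$. *)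

theory Defs
  imports "HOL-Analysis.Analysis"
begin

definition besselJ0 :: "complex \<Rightarrow> complex" where
  "besselJ0 z = (\<Sum>k. (-1)^k * (z/2)^(2*k) / (of_nat (fact k))^2)"

definition besselY0 :: "complex \<Rightarrow> complex" where
  "besselY0 z = (2 / of_real pi) * (Ln (z/2) + euler_mascheroni) * besselJ0 z
     + (2 / of_real pi) * (\<Sum>k. (-1)^(k+2) * harm (k+1) * (z/2)^(2*(k+1)) / (of_nat (fact (k+1)))^2)"

definition hankel1_0 :: "complex \<Rightarrow> complex" where
  "hankel1_0 z = besselJ0 z + \<i> * besselY0 z"

definition greenG :: "complex \<Rightarrow> real^2 \<Rightarrow> complex" where
  "greenG lam x = \<i>/4 * hankel1_0 (lam * of_real (norm x))"

definition gfun :: "complex \<Rightarrow> complex" where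
  "gfun lam = - (1 / (2 * of_real pi)) * Ln (lam/2) + \<i>/4 - euler_mascheroni / (2 * of_real pi)"

definition Gamma_mat :: "('n::finite \<Rightarrow> real) \<Rightarrow> ('n \<Rightarrow> real^2) \<Rightarrow> complex \<Rightarrow> complex^'n^'n" where
  "Gamma_mat \<alpha> y lam = (\<chi> j k. if j = k then of_real (\<alpha> j) - gfun lam else - greenG lam (y j - y k))"

text \<open>P: orthogonal projection onto the constant vectors; S = I - P.\<close>
definition Pmat :: "complex^'n::finite^'n" where
  "Pmat = (\<chi> i j. 1 / of_nat CARD('n))"

definition Smat :: "complex^'n::finite^'n" where
  "Smat = mat 1 - Pmat"

definition Dtilde :: "('n::finite \<Rightarrow> real) \<Rightarrow> ('n \<Rightarrow> real^2) \<Rightarrow> complex^'n^'n" where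
  "Dtilde \<alpha> y = (\<chi> j k. if j = k then of_real (\<alpha> j)
                           else of_real (ln (dist (y j) (y k)) / (2 * pi)))"

definition mrange :: "complex^'n::finite^'n \<Rightarrow> (complex^'n) set" where
  "mrange A = {A *v u | u. True}"

definition cinner :: "complex^'n::finite \<Rightarrow> complex^'n \<Rightarrow> complex" where
  "cinner v w = (\<Sum>i\<in>UNIV. v$i * cnj (w$i))"

definition is_orth_proj :: "complex^'n::finite^'n \<Rightarrow> (complex^'n) set \<Rightarrow> bool" where
  "is_orth_proj T K \<longleftrightarrow> (\<forall>v. T *v v \<in> K) \<and> (\<forall>v\<in>K. T *v v = v)
      \<and> (\<forall>v. \<forall>w\<in>K. cinner (v - T *v v) w = 0)"

text \<open>Inverse of T X T on the subspace T C^N, extended by 0 on its orthogonal complement: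
  T (T X T + (I - T))^{-1} T.\<close>
definition restr_inv :: "complex^'n::finite^'n \<Rightarrow> complex^'n^'n \<Rightarrow> complex^'n^'n" where
  "restr_inv T X = T ** matrix_inv (T ** X ** T + (mat 1 - T)) ** T"

end

theory Submission
  imports Defs "HOL-Real_Asymp.Real_Asymp"
begin

text \<open>
  Expanding the Hankel function at the origin gives
  \<open>-\<G>\<^sub>\<lambda>(x) = log|x|/(2\<pi>) - g(\<lambda>) + O(\<lambda>\<^sup>2 log \<lambda>)\<close>, hence
  \<open>\<Gamma>(\<lambda>) = D - g(\<lambda>) 1 1\<^sup>t + R(\<lambda>)\<close> with \<open>D = Dtilde \<alpha> y\<close> and \<open>R(\<lambda>) = O(\<lambda>\<^sup>2 log \<lambda>)\<close>.
  The hypotheses force \<open>D\<close> to be invertible and the kernel of \<open>SDS\<close> on \<open>S\<complex>\<^sup>N\<close>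
  to be the line through the real vector \<open>u = D\<^sup>-\<^sup>1 1\<close>, which satisfies \<open>1\<^sup>t u = 0\<close>.
  Then \<open>(D - g 1 1\<^sup>t)\<^sup>-\<^sup>1 = D\<^sup>-\<^sup>1 + g u u\<^sup>t\<close> exactly, and \<open>u u\<^sup>t = N T[TD\<^sup>2T]\<^sup>-\<^sup>1T\<close>.
  This inverse is only \<open>O(log \<lambda>)\<close>, so the resolvent identity shows that adding
  \<open>R(\<lambda>)\<close> changes it by \<open>O(\<lambda>\<^sup>2 log\<^sup>3 \<lambda>) = O(1)\<close>.
\<close>

section \<open>Small-argument behaviour of the Green function\<close>

lemma norm_suminf_le_geometric:
  fixes f :: "nat \<Rightarrow> 'a::banach"
  assumes f: "\<And>k. norm (f k) \<le> q ^ (k + 1)" and q: "0 \<le> q" "q \<le> 1/4"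
  shows "summable f" and "norm (suminf f) \<le> 4/3 * q"
proof -
  have s: "(\<lambda>k. q ^ (k + 1)) sums (q / (1 - q))"
    using sums_mult[OF geometric_sums[of q], of q] q by (simp add: field_simps)
  have sn: "summable (\<lambda>k. norm (f k))"
    by (rule summable_comparison_test[of _ "\<lambda>k. q ^ (k + 1)"]) (use f sums_summable[OF s] in auto)
  then show "summable f" by (rule summable_norm_cancel)
  have "norm (suminf f) \<le> (\<Sum>k. norm (f k))" by (rule summable_norm[OF sn])
  also have "\<dots> \<le> (\<Sum>k. q ^ (k + 1))" by (rule suminf_le) (use f sn sums_summable[OF s] in auto)
  also have "\<dots> = q / (1 - q)" using s sums_unique by metis
  also have "\<dots> \<le> 4/3 * q"
    using q mult_left_mono[of "4 * q" 1 q] by (simp add: field_simps)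
  finally show "norm (suminf f) \<le> 4/3 * q" .
qed

lemma besselJ0_minus_one_bound:
  assumes z: "norm z \<le> 1"
  shows "norm (besselJ0 z - 1) \<le> norm z ^ 2 / 3"
proof -
  define a where "a k = (-1) ^ k * (z / 2) ^ (2 * k) / (of_nat (fact k))\<^sup>2" for k
  define q where "q = norm z ^ 2 / 4"
  have q: "0 \<le> q" "q \<le> 1/4" unfolding q_def using z by (auto simp: power_le_one)
  have na: "norm (a k) \<le> q ^ k" for k
  proof -
    have "norm (a k) = q ^ k / (fact k)\<^sup>2"
      unfolding a_def q_def by (simp add: norm_divide norm_mult norm_power power_mult power_divide)
    also have "\<dots> \<le> q ^ k"
      using q fact_ge_1[of k, where 'a=real] by (simp add: divide_le_eq one_le_power mult_le_cancel_left1)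
    finally show ?thesis .
  qed
  have "summable a"
    by (rule summable_comparison_test[of _ "\<lambda>k. q ^ k"]) (use na q in auto)
  then have "besselJ0 z - 1 = (\<Sum>k. a (Suc k))"
    unfolding besselJ0_def a_def[symmetric] by (simp add: suminf_split_head) (simp add: a_def)
  moreover have "norm (\<Sum>k. a (Suc k)) \<le> 4/3 * q"
    by (rule norm_suminf_le_geometric) (use na[of "Suc _"] q in \<open>auto simp: add.commute\<close>)
  ultimately show ?thesis unfolding q_def by simp
qed

definition besselY0_series :: "complex \<Rightarrow> complex" where
  "besselY0_series z =
     (\<Sum>k. (-1) ^ (k + 2) * harm (k + 1) * (z / 2) ^ (2 * (k + 1)) / (of_nat (fact (k + 1)))\<^sup>2)"

lemma harm_le: "harm n \<le> real n"
proof -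
  have "harm n = (\<Sum>k=1..n. inverse (real k))" by (simp add: harm_def)
  also have "\<dots> \<le> of_nat (card {1..n}) * 1" by (rule sum_bounded_above) (auto simp: field_simps)
  finally show ?thesis by simp
qed

lemma besselY0_series_bound:
  assumes z: "norm z \<le> 1"
  shows "norm (besselY0_series z) \<le> norm z ^ 2 / 3"
proof -
  define q where "q = norm z ^ 2 / 4"
  have q: "0 \<le> q" "q \<le> 1/4" unfolding q_def using z by (auto simp: power_le_one)
  have nb: "norm ((-1) ^ (k + 2) * harm (k + 1) * (z / 2) ^ (2 * (k + 1))
              / (of_nat (fact (k + 1)) :: complex)\<^sup>2) \<le> q ^ (k + 1)" for k
  proof -
    have "harm (k + 1) \<le> real (k + 1)" by (rule harm_le)
    also have "\<dots> \<le> fact (k + 1)" by (metis fact_ge_self of_nat_fact of_nat_le_iff)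
    also have "(fact (k + 1) :: real) \<le> (fact (k + 1))\<^sup>2"
      using fact_ge_1[of "k + 1", where 'a=real] by (simp add: power2_eq_square)
    finally have "harm (k + 1) * q ^ (k + 1) \<le> (fact (k + 1))\<^sup>2 * q ^ (k + 1)"
      using q by (intro mult_right_mono) auto
    then have "harm (k + 1) * q ^ (k + 1) / (fact (k + 1))\<^sup>2 \<le> q ^ (k + 1)"
      by (simp add: divide_le_eq mult_ac)
    then show ?thesis
      unfolding q_def
      by (simp add: norm_divide norm_mult norm_power power_mult power_divide norm_harm
          power2_eq_square del: fact_Suc of_nat_Suc)
  qed
  have "norm (besselY0_series z) \<le> 4/3 * q"
    unfolding besselY0_series_def by (rule norm_suminf_le_geometric[OF nb q])
  then show ?thesis unfolding q_def by simp
qed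

lemma greenG_expansion:
  assumes lam: "lam \<noteq> 0" and x: "x \<noteq> 0"
  shows "greenG lam x = (gfun lam - of_real (ln (norm x) / (2 * pi))) * besselJ0 (lam * of_real (norm x))
           - besselY0_series (lam * of_real (norm x)) / (2 * of_real pi)"
proof -
  have "Ln (lam * of_real (norm x) / 2) = of_real (ln (norm x)) + Ln (lam / 2)"
    using Ln_times_of_real[of "norm x" "lam / 2"] lam x by (simp add: mult.commute Ln_of_real)
  then show ?thesis
    unfolding greenG_def hankel1_0_def besselY0_def gfun_def besselY0_series_def[symmetric]
    by (simp add: field_simps)
qed

lemma norm_gfun_le:
  assumes lam: "lam \<noteq> 0"
  shows "norm (gfun lam) \<le> \<bar>ln (norm lam)\<bar> + 6"
proof -
  have "norm (Ln (lam / 2)) \<le> \<bar>ln (norm lam / 2)\<bar> + pi"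
    using cmod_le[of "Ln (lam / 2)"] mpi_less_Im_Ln[of "lam / 2"] Im_Ln_le_pi[of "lam / 2"] lam
    by (simp add: norm_divide)
  also have "\<bar>ln (norm lam / 2)\<bar> \<le> \<bar>ln (norm lam)\<bar> + 1"
  proof -
    have "ln (norm lam / 2) = ln (norm lam) - ln 2" using lam by (simp add: ln_div)
    moreover have "0 < ln (2::real)" by simp
    ultimately show ?thesis using ln_2_less_1 by arith
  qed
  finally have L: "norm (Ln (lam / 2)) \<le> \<bar>ln (norm lam)\<bar> + 1 + pi" by simp
  have "norm (gfun lam) \<le> norm (- (1 / (2 * of_real pi)) * Ln (lam / 2)) + norm (\<i> / 4 :: complex)
         + norm (euler_mascheroni / (2 * of_real pi) :: complex)"
    unfolding gfun_def by (rule order_trans[OF norm_triangle_ineq4 add_right_mono[OF norm_triangle_ineq]])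
  also have "\<dots> = norm (Ln (lam / 2)) / (2 * pi) + 1/4 + euler_mascheroni / (2 * pi)"
    using norm_of_real[of "euler_mascheroni :: real", where 'a=complex] euler_mascheroni_pos
    by (simp add: norm_mult norm_divide)
  also have "\<dots> \<le> (\<bar>ln (norm lam)\<bar> + 1 + pi) / (2 * pi) + 1/4 + 1 / (2 * pi)"
    using L euler_mascheroni_less_13_over_22 by (intro add_mono divide_right_mono) auto
  also have "\<dots> \<le> \<bar>ln (norm lam)\<bar> + 6"
    using pi_gt3 mult_right_mono[of 1 pi "\<bar>ln (norm lam)\<bar>"] by (simp add: field_simps)
  finally show ?thesis .
qed

lemma greenG_remainder_bound:
  assumes lam: "lam \<noteq> 0" and x: "x \<noteq> 0" and small: "norm lam * norm x \<le> 1"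
  shows "norm (- greenG lam x - (of_real (ln (norm x) / (2 * pi)) - gfun lam))
           \<le> (norm (gfun lam) + \<bar>ln (norm x)\<bar> + 1) * (norm lam * norm x)\<^sup>2"
proof -
  define z where "z = lam * of_real (norm x)"
  define L :: complex where "L = of_real (ln (norm x) / (2 * pi))"
  have nz: "norm z = norm lam * norm x" by (simp add: z_def norm_mult)
  have J: "norm (besselJ0 z - 1) \<le> norm z ^ 2 / 3"
    and Y: "norm (besselY0_series z) \<le> norm z ^ 2 / 3"
    using besselJ0_minus_one_bound[of z] besselY0_series_bound[of z] small nz by auto
  have nL: "norm L \<le> \<bar>ln (norm x)\<bar>"
    using pi_gt3 by (simp add: L_def norm_divide divide_le_eq mult_le_cancel_left1)
  have "- greenG lam x - (L - gfun lam)
        = - ((gfun lam - L) * (besselJ0 z - 1)) + besselY0_series z / (2 * of_real pi)"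
    unfolding greenG_expansion[OF lam x] z_def L_def by (simp add: field_simps)
  also have "norm \<dots> \<le> norm (gfun lam - L) * norm (besselJ0 z - 1) + norm (besselY0_series z) / (2 * pi)"
    by (rule order_trans[OF norm_triangle_ineq]) (simp add: norm_mult norm_divide)
  also have "\<dots> \<le> (norm (gfun lam) + norm L) * (norm z ^ 2 / 3) + (norm z ^ 2 / 3) / (2 * pi)"
    by (intro add_mono mult_mono divide_right_mono J Y norm_triangle_ineq4) auto
  also have "\<dots> \<le> (norm (gfun lam) + \<bar>ln (norm x)\<bar> + 1) * norm z ^ 2"
  proof -
    have "(norm (gfun lam) + norm L) * (norm z ^ 2 / 3) \<le> (norm (gfun lam) + \<bar>ln (norm x)\<bar>) * norm z ^ 2"
      using nL by (intro mult_mono) auto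
    moreover have "1 * norm z ^ 2 \<le> (6 * pi) * norm z ^ 2"
      by (rule mult_right_mono) (use pi_gt3 in auto)
    then have "(norm z ^ 2 / 3) / (2 * pi) \<le> norm z ^ 2"
      using pi_gt3 by (simp add: field_simps)
    moreover have "(norm (gfun lam) + \<bar>ln (norm x)\<bar> + 1) * norm z ^ 2
        = (norm (gfun lam) + \<bar>ln (norm x)\<bar>) * norm z ^ 2 + norm z ^ 2" by (simp add: algebra_simps)
    ultimately show ?thesis by linarith
  qed
  finally show ?thesis unfolding L_def nz .
qed

section \<open>Perturbation of matrix inverses\<close>

text \<open>Entrywise \<open>\<ell>\<^sup>1\<close> norms: unlike the library's Euclidean norm on matrices they come with
  an easy proof of submultiplicativity, and they dominate it.\<close>

definition norm1 :: "'a::real_normed_vector^'n::finite \<Rightarrow> real" where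
  "norm1 x = (\<Sum>i\<in>UNIV. norm (x $ i))"

definition mnorm1 :: "'a::real_normed_vector^'n::finite^'m::finite \<Rightarrow> real" where
  "mnorm1 A = (\<Sum>i\<in>UNIV. norm1 (A $ i))"

lemma norm1_nonneg: "0 \<le> norm1 x"
  unfolding norm1_def by (simp add: sum_nonneg)

lemma mnorm1_nonneg: "0 \<le> mnorm1 A"
  unfolding mnorm1_def by (simp add: sum_nonneg norm1_nonneg)

lemma norm1_eq_0_iff: "norm1 x = 0 \<longleftrightarrow> x = 0"
  unfolding norm1_def by (subst sum_nonneg_eq_0_iff) (auto simp: vec_eq_iff)

lemma norm_component_le_norm1: "norm (x $ i) \<le> norm1 x"
  unfolding norm1_def by (rule member_le_sum) auto

lemma norm1_matrix_vector_mult_le: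
  fixes A :: "'a::real_normed_algebra_1^'n::finite^'m::finite"
  shows "norm1 (A *v x) \<le> mnorm1 A * norm1 x"
proof -
  have "norm ((A *v x) $ i) \<le> norm1 (A $ i) * norm1 x" for i
  proof -
    have "norm ((A *v x) $ i) \<le> (\<Sum>j\<in>UNIV. norm (A $ i $ j) * norm (x $ j))"
      unfolding matrix_vector_mult_def by (simp add: order_trans[OF norm_sum] sum_mono norm_mult_ineq)
    also have "\<dots> \<le> (\<Sum>j\<in>UNIV. norm (A $ i $ j) * norm1 x)"
      by (intro sum_mono mult_left_mono norm_component_le_norm1) auto
    finally show ?thesis by (simp add: norm1_def sum_distrib_right)
  qed
  then show ?thesis
    unfolding norm1_def[of "A *v x"] mnorm1_def by (simp add: sum_distrib_right sum_mono)
qed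

lemma mnorm1_mult_le:
  fixes A :: "'a::real_normed_algebra_1^'n::finite^'m::finite" and B :: "'a^'p::finite^'n"
  shows "mnorm1 (A ** B) \<le> mnorm1 A * mnorm1 B"
proof -
  have "norm1 ((A ** B) $ i) \<le> norm1 (A $ i) * mnorm1 B" for i
  proof -
    have "norm1 ((A ** B) $ i) \<le> (\<Sum>j\<in>UNIV. \<Sum>k\<in>UNIV. norm (A $ i $ k) * norm (B $ k $ j))"
      unfolding norm1_def matrix_matrix_mult_def
      by (intro sum_mono) (simp add: order_trans[OF norm_sum] sum_mono norm_mult_ineq)
    also have "\<dots> = (\<Sum>k\<in>UNIV. norm (A $ i $ k) * norm1 (B $ k))"
      by (subst sum.swap) (simp add: norm1_def sum_distrib_left)
    also have "\<dots> \<le> (\<Sum>k\<in>UNIV. norm (A $ i $ k) * mnorm1 B)"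
      unfolding mnorm1_def by (intro sum_mono mult_left_mono member_le_sum) (auto simp: norm1_nonneg)
    finally show ?thesis by (simp add: norm1_def sum_distrib_right)
  qed
  then show ?thesis
    unfolding mnorm1_def[of "A ** B"] mnorm1_def[of A] by (simp add: sum_distrib_right sum_mono)
qed

lemma mnorm1_add_le: "mnorm1 (A + B) \<le> mnorm1 A + mnorm1 B"
  unfolding mnorm1_def norm1_def by (simp add: sum.distrib[symmetric] sum_mono norm_triangle_ineq)

lemma mnorm1_diff_le: "mnorm1 (A - B) \<le> mnorm1 A + mnorm1 B"
  unfolding mnorm1_def norm1_def by (simp add: sum.distrib[symmetric] sum_mono norm_triangle_ineq4)

lemma norm_le_mnorm1: "norm A \<le> mnorm1 A"
proof -
  have norm_le_sum: "norm x \<le> (\<Sum>i\<in>UNIV. norm (x $ i))" for x :: "'x::real_normed_vector^'z::finite"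
    unfolding norm_vec_def by (rule L2_set_le_sum) auto
  have "norm A \<le> (\<Sum>i\<in>UNIV. norm (A $ i))" by (rule norm_le_sum)
  also have "\<dots> \<le> mnorm1 A" unfolding mnorm1_def norm1_def by (intro sum_mono norm_le_sum)
  finally show ?thesis .
qed

lemma matrix_add_rdistrib: "(B + C) ** A = B ** A + C ** A"
  by (vector matrix_matrix_mult_def sum.distrib[symmetric] field_simps)

lemma matrix_inv_left_right:
  assumes "invertible A"
  shows "A ** matrix_inv A = mat 1" and "matrix_inv A ** A = mat 1"
  using someI_ex[OF assms[unfolded invertible_def]] unfolding matrix_inv_def by auto

lemma matrix_inv_eqI:
  fixes A B :: "'a::field^'n::finite^'n"
  assumes AB: "A ** B = mat 1"
  shows "invertible A" and "matrix_inv A = B"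
proof -
  have BA: "B ** A = mat 1" using AB matrix_left_right_inverse by blast
  then show inv: "invertible A" using AB unfolding invertible_def by blast
  have "matrix_inv A = (B ** A) ** matrix_inv A" using BA by simp
  also have "\<dots> = B" by (simp add: matrix_mul_assoc[symmetric] matrix_inv_left_right(1)[OF inv])
  finally show "matrix_inv A = B" .
qed

text \<open>If \<open>X = M\<^sup>-\<^sup>1\<close> and \<open>\<parallel>R\<parallel>\<parallel>X\<parallel> \<le> 1/2\<close>, then \<open>(M + R)\<^sup>-\<^sup>1 = X - (M + R)\<^sup>-\<^sup>1 R X\<close> gives
  \<open>\<parallel>(M + R)\<^sup>-\<^sup>1\<parallel> \<le> 2\<parallel>X\<parallel>\<close> and hence the estimate.\<close>

lemma inverse_perturbation:
  fixes M X R :: "'a::real_normed_field^'n::finite^'n"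
  assumes MX: "M ** X = mat 1" and small: "mnorm1 R * mnorm1 X \<le> 1/2"
  shows "invertible (M + R)" and "mnorm1 (matrix_inv (M + R) - X) \<le> 2 * mnorm1 X ^ 2 * mnorm1 R"
proof -
  have XM: "X ** M = mat 1" using MX matrix_left_right_inverse by blast
  have "w = 0" if "(M + R) *v w = 0" for w
  proof -
    have "w = X *v (M *v w)" by (simp add: matrix_vector_mul_assoc XM)
    also have "M *v w = - (R *v w)"
      using that by (simp add: matrix_vector_mult_add_rdistrib eq_neg_iff_add_eq_0)
    finally have "norm1 w \<le> mnorm1 X * norm1 (- (R *v w))"
      by (metis norm1_matrix_vector_mult_le)
    then have "norm1 w \<le> mnorm1 X * norm1 (R *v w)" by (simp add: norm1_def)
    also have "\<dots> \<le> mnorm1 X * (mnorm1 R * norm1 w)"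
      by (rule mult_left_mono[OF norm1_matrix_vector_mult_le mnorm1_nonneg])
    also have "\<dots> \<le> 1/2 * norm1 w"
      using small norm1_nonneg[of w] by (metis mult.assoc mult.commute mult_right_mono)
    finally show "w = 0" using norm1_nonneg[of w] norm1_eq_0_iff by fastforce
  qed
  then show inv: "invertible (M + R)"
    using matrix_left_invertible_ker invertible_left_inverse by blast
  define Y where "Y = matrix_inv (M + R)"
  have "Y ** (M + R) = mat 1" unfolding Y_def by (rule matrix_inv_left_right(2)[OF inv])
  then have "X = Y + Y ** R ** X"
    by (metis MX matrix_add_ldistrib matrix_add_rdistrib matrix_mul_assoc matrix_mul_lid matrix_mul_rid)
  then have YX: "Y - X = - (Y ** R ** X)" and Y: "Y = X - Y ** R ** X" by (simp_all add: algebra_simps)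
  have YRX: "mnorm1 (Y ** R ** X) \<le> mnorm1 Y * mnorm1 R * mnorm1 X"
    by (rule order_trans[OF mnorm1_mult_le mult_right_mono[OF mnorm1_mult_le mnorm1_nonneg]])
  have "mnorm1 Y \<le> mnorm1 X + mnorm1 Y * (mnorm1 R * mnorm1 X)"
    using mnorm1_diff_le[of X "Y ** R ** X"] YRX Y by (simp add: mult.assoc)
  also have "\<dots> \<le> mnorm1 X + mnorm1 Y * (1/2)"
    using small mnorm1_nonneg[of Y] by (intro add_left_mono mult_left_mono) auto
  finally have "mnorm1 Y \<le> 2 * mnorm1 X" by simp
  have "mnorm1 (Y - X) \<le> mnorm1 Y * mnorm1 R * mnorm1 X"
    using YX YRX by (simp add: mnorm1_def norm1_def)
  also have "\<dots> \<le> (2 * mnorm1 X) * mnorm1 R * mnorm1 X"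
    by (intro mult_right_mono \<open>mnorm1 Y \<le> 2 * mnorm1 X\<close> mnorm1_nonneg)
  finally show "mnorm1 (matrix_inv (M + R) - X) \<le> 2 * mnorm1 X ^ 2 * mnorm1 R"
    unfolding Y_def by (simp add: power2_eq_square mult_ac)
qed

section \<open>The kernel of \<open>S D S\<close> on \<open>S \<complex>\<^sup>N\<close>\<close>

lemma Smat_mult_vec: "(Smat :: complex^'n::finite^'n) *v w = w - vec ((\<Sum>j\<in>UNIV. w $ j) / of_nat CARD('n))"
proof -
  have "(Pmat :: complex^'n^'n) *v w = vec ((\<Sum>j\<in>UNIV. w $ j) / of_nat CARD('n))"
    by (simp add: Pmat_def matrix_vector_mult_def sum_divide_distrib vec_eq_iff)
  then show ?thesis unfolding Smat_def by (simp add: matrix_vector_mult_diff_rdistrib)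
qed

lemma mrange_Smat_iff: "(w :: complex^'n::finite) \<in> mrange Smat \<longleftrightarrow> (\<Sum>i\<in>UNIV. w $ i) = 0"
proof
  assume "w \<in> mrange Smat"
  then obtain u where "w = Smat *v u" unfolding mrange_def by blast
  then show "(\<Sum>i\<in>UNIV. w $ i) = 0" by (simp add: Smat_mult_vec sum_subtractf)
next
  assume "(\<Sum>i\<in>UNIV. w $ i) = 0"
  then have "w = Smat *v w" by (simp add: Smat_mult_vec)
  then show "w \<in> mrange Smat" unfolding mrange_def by blast
qed

lemma Smat_mult_eq_0_iff: "(Smat :: complex^'n::finite^'n) *v x = 0 \<longleftrightarrow> (\<exists>c. x = vec c)"
proof
  assume "Smat *v x = 0"
  then have "x = vec ((\<Sum>j\<in>UNIV. x $ j) / of_nat CARD('n))" by (simp add: Smat_mult_vec)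
  then show "\<exists>c. x = vec c" ..
qed (auto simp: Smat_mult_vec)

lemma SDS_kernel_iff:
  "v \<in> {v \<in> mrange Smat. (Smat ** (D :: complex^'n::finite^'n) ** Smat) *v v = 0}
     \<longleftrightarrow> (\<Sum>i\<in>UNIV. v $ i) = 0 \<and> (\<exists>c. D *v v = vec c)"
proof -
  have "(Smat ** D ** Smat) *v v = Smat *v (D *v v)" if "(\<Sum>i\<in>UNIV. v $ i) = 0"
    using that by (simp add: matrix_vector_mul_assoc[symmetric] Smat_mult_vec)
  then show ?thesis by (auto simp: mrange_Smat_iff Smat_mult_eq_0_iff)
qed

lemma sum_mult_symmetric_matrix_vector:
  fixes D :: "'a::comm_semiring_1^'n::finite^'n"
  assumes sym: "\<And>i j. D $ i $ j = D $ j $ i"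
  shows "(\<Sum>i\<in>UNIV. x $ i * (D *v w) $ i) = (\<Sum>i\<in>UNIV. (D *v x) $ i * w $ i)"
  unfolding matrix_vector_mult_def
  by (simp add: sum_distrib_left sum_distrib_right mult_ac) (subst sum.swap, simp add: sym mult_ac)

text \<open>If \<open>D\<^sup>2\<close> is non-singular on the kernel \<open>K\<close>, then \<open>D v = c 1\<close> with \<open>c \<noteq> 0\<close> for every
  non-zero \<open>v \<in> K\<close>; this pins \<open>K\<close> down to the line through \<open>D\<^sup>-\<^sup>1 1\<close>.\<close>

lemma SDS_kernel_line:
  fixes D :: "complex^'n::finite^'n"
  defines "K \<equiv> {v \<in> mrange Smat. (Smat ** D ** Smat) *v v = 0}"
  assumes sym: "\<And>i j. D $ i $ j = D $ j $ i"
    and nontrivial: "\<exists>v\<in>K. v \<noteq> 0"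
    and nondegenerate: "\<And>v. v \<in> K \<Longrightarrow> D *v (D *v v) = 0 \<Longrightarrow> v = 0"
  obtains u where "D *v u = 1" and "K = {c *s u | c. True}" and "invertible D"
proof -
  have K_iff: "v \<in> K \<longleftrightarrow> (\<Sum>i\<in>UNIV. v $ i) = 0 \<and> (\<exists>c. D *v v = vec c)" for v
    unfolding K_def by (rule SDS_kernel_iff)
  have sum_scaled: "(\<Sum>i\<in>UNIV. (c *s v) $ i) = c * (\<Sum>i\<in>UNIV. v $ i)"
    for c :: complex and v :: "complex^'n"
    by (simp add: sum_distrib_left)
  have scaled: "c *s v \<in> K" if v: "v \<in> K" for c v
  proof -
    obtain d where "D *v v = vec d" using v K_iff[of v] by blast
    then have "D *v (c *s v) = vec (c * d)" by (simp add: vector_scalar_commute vec_eq_iff)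
    then show ?thesis using v K_iff[of v] K_iff[of "c *s v"] sum_scaled[of c v] by auto
  qed
  obtain v0 where v0: "v0 \<in> K" "v0 \<noteq> 0" using nontrivial by blast
  then obtain c0 where c0: "D *v v0 = vec c0" using K_iff[of v0] by blast
  have "c0 \<noteq> 0"
    using nondegenerate[OF v0(1)] v0(2) c0 by auto
  define u where "u = (1 / c0) *s v0"
  have Du: "D *v u = 1"
    using \<open>c0 \<noteq> 0\<close> by (simp add: u_def vector_scalar_commute c0 vec_eq_iff)
  have uK: "u \<in> K" unfolding u_def by (rule scaled[OF v0(1)])
  have line: "\<exists>c. w = c *s u" if w: "w \<in> K" for w
  proof -
    obtain c where c: "D *v w = vec c" using w K_iff[of w] by blast
    have "(\<Sum>i\<in>UNIV. (w - c *s u) $ i) = 0"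
      using w uK K_iff[of w] K_iff[of u] sum_scaled[of c u] by (simp add: sum_subtractf)
    moreover have D0: "D *v (w - c *s u) = 0"
      by (simp add: matrix_vector_mult_diff_distrib vector_scalar_commute Du c vec_eq_iff)
    ultimately have "w - c *s u \<in> K" by (auto simp: K_iff intro: exI[of _ 0])
    then have "w - c *s u = 0" using nondegenerate D0 by (metis matrix_vector_mult_0_right)
    then show ?thesis by auto
  qed
  have "w = 0" if Dw: "D *v w = 0" for w
  proof -
    have "(\<Sum>i\<in>UNIV. w $ i) = (\<Sum>i\<in>UNIV. (D *v u) $ i * w $ i)" by (simp add: Du)
    also have "\<dots> = 0" using sum_mult_symmetric_matrix_vector[OF sym, of u w] Dw by simp
    finally have "w \<in> K" using Dw by (auto simp: K_iff intro: exI[of _ 0])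
    then obtain c where "w = c *s u" using line by blast
    moreover have "c = 0"
      using Dw arg_cong[OF calculation, of "\<lambda>w. (D *v w) $ undefined"]
      by (simp add: vector_scalar_commute Du)
    ultimately show "w = 0" by simp
  qed
  then have "invertible D"
    using matrix_left_invertible_ker invertible_left_inverse by blast
  moreover have "K = {c *s u | c. True}" using line scaled[OF uK] by blast
  ultimately show ?thesis using that Du by blast
qed

lemma real_solution_of_real_system:
  fixes D :: "complex^'n::finite^'n"
  assumes real: "\<And>i j. cnj (D $ i $ j) = D $ i $ j" and "invertible D"
    and b: "\<And>i. cnj (b $ i) = b $ i" and Du: "D *v u = b"
  shows "cnj (u $ i) = u $ i"
proof -
  have "(D *v (\<chi> i. cnj (u $ i))) $ j = cnj ((D *v u) $ j)" for j
    using real by (simp add: matrix_vector_mult_def)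
  then have "D *v (\<chi> i. cnj (u $ i)) = D *v u"
    using Du b by (simp add: vec_eq_iff)
  then have "(\<chi> i. cnj (u $ i)) = u"
    using inj_matrix_vector_mult[OF \<open>invertible D\<close>] by (simp add: inj_eq)
  then show ?thesis by (metis vec_lambda_beta)
qed

section \<open>The restricted inverse \<open>T [T D\<^sup>2 T]\<^sup>-\<^sup>1 T\<close>\<close>

lemma is_orth_proj_mrange:
  assumes "is_orth_proj T K"
  shows "mrange T = K"
proof
  show "mrange T \<subseteq> K" using assms unfolding is_orth_proj_def mrange_def by auto
  show "K \<subseteq> mrange T"
  proof
    fix v assume "v \<in> K"
    then have "v = T *v v" using assms unfolding is_orth_proj_def by simp
    then show "v \<in> mrange T" unfolding mrange_def by blast
  qed
qed

lemma cinner_self: "cinner u u = of_real (\<Sum>i\<in>UNIV. (norm (u $ i))\<^sup>2)"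
  unfolding cinner_def by (simp only: of_real_sum complex_norm_square)

lemma cinner_self_eq_0_iff: "cinner u u = 0 \<longleftrightarrow> u = 0"
  unfolding cinner_self of_real_eq_0_iff by (subst sum_nonneg_eq_0_iff) (auto simp: vec_eq_iff)

lemma cinner_diff_smult_left: "cinner (w - c *s u) v = cinner w v - c * cinner u v"
  unfolding cinner_def by (simp add: sum_subtractf sum_distrib_left algebra_simps)

lemma is_orth_proj_line:
  assumes T: "is_orth_proj T {c *s u | c. True}" and "u \<noteq> 0"
  shows "T *v w = (cinner w u / cinner u u) *s u"
proof -
  obtain c where c: "T *v w = c *s u" using T unfolding is_orth_proj_def by blast
  have "u \<in> {c *s u | c. True}" by (rule CollectI, rule exI[of _ 1]) simp
  then have "cinner (w - T *v w) u = 0" using T unfolding is_orth_proj_def by blast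
  then have "c = cinner w u / cinner u u"
    using \<open>u \<noteq> 0\<close> by (simp add: c cinner_diff_smult_left cinner_self_eq_0_iff field_simps)
  then show ?thesis using c by simp
qed

lemma restr_inv_scalar_compression:
  fixes T X :: "complex^'n::finite^'n"
  assumes idem: "\<And>w. T *v (T *v w) = T *v w"
    and comp: "\<And>w. T *v (X *v (T *v w)) = \<kappa> *s (T *v w)" and "\<kappa> \<noteq> 0"
  shows "restr_inv T X *v w = (1 / \<kappa>) *s (T *v w)"
proof -
  define A where "A = T ** X ** T + (mat 1 - T)"
  define Y :: "complex^'n^'n" where "Y = (\<chi> i j. (1 / \<kappa> - 1) * T $ i $ j) + mat 1"
  have scaled: "(\<chi> i j. c * T $ i $ j) *v w = c *s (T *v w)" for c w
    by (simp add: matrix_vector_mult_def vec_eq_iff sum_distrib_left mult.assoc)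
  have Y: "Y *v w = (1 / \<kappa> - 1) *s (T *v w) + w" for w
    by (simp add: Y_def matrix_vector_mult_add_rdistrib scaled)
  have TY: "T *v (Y *v w) = (1 / \<kappa>) *s (T *v w)" for w
    by (simp only: Y matrix_vector_right_distrib vector_scalar_commute idem) (simp add: vector_sub_rdistrib)
  have A: "A *v z = \<kappa> *s (T *v z) + (z - T *v z)" for z
    by (simp add: A_def matrix_vector_mult_add_rdistrib matrix_vector_mult_diff_rdistrib
        matrix_vector_mul_assoc[symmetric] comp)
  have "(A ** Y) *v w = mat 1 *v w" for w
  proof -
    have "(A ** Y) *v w
        = \<kappa> *s ((1 / \<kappa>) *s (T *v w)) + ((1 / \<kappa> - 1) *s (T *v w) + w - (1 / \<kappa>) *s (T *v w))"
      by (simp only: matrix_vector_mul_assoc[symmetric] A TY) (simp only: Y)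
    also have "\<dots> = w" using \<open>\<kappa> \<noteq> 0\<close> by (simp add: vector_smult_assoc vector_sub_rdistrib)
    finally show ?thesis by simp
  qed
  then have "matrix_inv A = Y" by (intro matrix_inv_eqI) (simp add: matrix_eq)
  then have "restr_inv T X *v w = T *v (Y *v (T *v w))"
    by (simp add: restr_inv_def A_def matrix_vector_mul_assoc matrix_mul_assoc)
  then show ?thesis by (simp add: TY idem)
qed

lemma restr_inv_rank_one:
  fixes D T :: "complex^'n::finite^'n"
  assumes sym: "\<And>i j. D $ i $ j = D $ j $ i" and Du: "D *v u = 1"
    and real: "\<And>i. cnj (u $ i) = u $ i" and "u \<noteq> 0"
    and T: "\<And>w. T *v w = (cinner w u / cinner u u) *s u"
  shows "restr_inv T (D ** D) = (\<chi> i j. u $ i * u $ j / of_nat CARD('n))"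
proof -
  define sc where "sc = cinner u u"
  have "sc \<noteq> 0" using \<open>u \<noteq> 0\<close> by (simp add: sc_def cinner_self_eq_0_iff)
  have cinner_u: "cinner w u = (\<Sum>j\<in>UNIV. w $ j * u $ j)" for w
    unfolding cinner_def by (simp add: real)
  have Tu: "T *v u = u" using \<open>sc \<noteq> 0\<close> by (simp add: T sc_def[symmetric])
  have idem: "T *v (T *v w) = T *v w" for w
    by (metis T Tu vector_scalar_commute)
  have "cinner (D *v 1) u = (\<Sum>j\<in>UNIV. (D *v u) $ j * 1 $ j)"
    unfolding cinner_u using sum_mult_symmetric_matrix_vector[OF sym, of u 1] by (simp add: mult.commute)
  then have DD1: "cinner (D *v 1) u = of_nat CARD('n)" by (simp add: Du)
  have comp: "T *v ((D ** D) *v (T *v w)) = (of_nat CARD('n) / sc) *s (T *v w)" for w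
    by (simp add: T[of w] T[of "D *v 1"] vector_scalar_commute matrix_vector_mul_assoc[symmetric] Du DD1
        sc_def vector_smult_assoc mult.commute)
  have "restr_inv T (D ** D) *v w = (\<chi> i j. u $ i * u $ j / of_nat CARD('n)) *v w" for w
  proof -
    have "restr_inv T (D ** D) *v w = (1 / (of_nat CARD('n) / sc)) *s ((cinner w u / sc) *s u)"
      using restr_inv_scalar_compression[OF idem comp, of w] \<open>sc \<noteq> 0\<close> by (simp add: T sc_def)
    also have "\<dots> = (cinner w u / of_nat CARD('n)) *s u"
      using \<open>sc \<noteq> 0\<close> by (simp add: vector_smult_assoc)
    also have "\<dots> = (\<chi> i j. u $ i * u $ j / of_nat CARD('n)) *v w"
      by (simp add: cinner_u vec_eq_iff matrix_vector_mult_def sum_distrib_left sum_divide_distrib mult_ac)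
    finally show ?thesis .
  qed
  then show ?thesis by (simp add: matrix_eq)
qed

section \<open>Inverting the leading part \<open>D - g 1 1\<^sup>t\<close>\<close>

lemma rank_one_update_inverse:
  fixes D B :: "'a::comm_ring_1^'n::finite^'n"
  assumes DB: "D ** B = mat 1" and sym: "\<And>i j. D $ i $ j = D $ j $ i"
    and Du: "D *v u = 1" and sum_u: "(\<Sum>i\<in>UNIV. u $ i) = 0"
  shows "(\<chi> i j. D $ i $ j - g) ** (\<chi> i j. B $ i $ j + g * (u $ i * u $ j)) = mat 1"
proof -
  have "u v* D = 1"
    using Du by (simp add: vec_eq_iff vector_matrix_mult_def matrix_vector_mult_def sym mult.commute)
  then have "1 v* B = u" by (metis vector_matrix_mul_assoc DB vector_matrix_mul_rid)
  moreover have "(1 v* B) $ j = (\<Sum>k\<in>UNIV. B $ k $ j)" for j by (simp add: vector_matrix_mult_def)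
  ultimately have colB: "(\<Sum>k\<in>UNIV. B $ k $ j) = u $ j" for j by simp
  have rowD: "(\<Sum>k\<in>UNIV. D $ i $ k * u $ k) = 1" for i
    using arg_cong[of _ _ "\<lambda>v. v $ i", OF Du] by (simp add: matrix_vector_mult_def)
  have "(\<Sum>k\<in>UNIV. (D $ i $ k - g) * (B $ k $ j + g * (u $ k * u $ j))) = (D ** B) $ i $ j" for i j
  proof -
    have "(D $ i $ k - g) * (B $ k $ j + g * (u $ k * u $ j))
        = D $ i $ k * B $ k $ j + g * u $ j * (D $ i $ k * u $ k) - g * B $ k $ j - g * g * u $ j * u $ k"
      for k by (simp add: algebra_simps)
    then have "(\<Sum>k\<in>UNIV. (D $ i $ k - g) * (B $ k $ j + g * (u $ k * u $ j)))
        = (\<Sum>k\<in>UNIV. D $ i $ k * B $ k $ j) + g * u $ j * (\<Sum>k\<in>UNIV. D $ i $ k * u $ k)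
          - g * (\<Sum>k\<in>UNIV. B $ k $ j) - g * g * u $ j * (\<Sum>k\<in>UNIV. u $ k)"
      by (simp add: sum.distrib sum_subtractf sum_distrib_left)
    then show ?thesis by (simp add: rowD colB sum_u matrix_matrix_mult_def)
  qed
  then have "(\<chi> i j. D $ i $ j - g) ** (\<chi> i j. B $ i $ j + g * (u $ i * u $ j)) = D ** B"
    by (simp add: matrix_matrix_mult_def vec_eq_iff)
  with DB show ?thesis by simp
qed

lemma inverse_perturbation_bounded:
  fixes M X R :: "'a::real_normed_field^'n::finite^'n"
  assumes "M ** X = mat 1" and X: "mnorm1 X \<le> P" and "1 \<le> P" and R: "mnorm1 R * P\<^sup>2 \<le> 1/2"
  shows "invertible (M + R)" and "mnorm1 (matrix_inv (M + R) - X) \<le> 1"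
proof -
  have "mnorm1 R * mnorm1 X \<le> mnorm1 R * P\<^sup>2"
    using X \<open>1 \<le> P\<close> mnorm1_nonneg[of R] mnorm1_nonneg[of X]
    by (intro mult_left_mono) (auto simp: power2_eq_square intro: order_trans[OF _ mult_right_mono[of 1 P P]])
  then have small: "mnorm1 R * mnorm1 X \<le> 1/2" using R by linarith
  show "invertible (M + R)" by (rule inverse_perturbation(1)[OF \<open>M ** X = mat 1\<close> small])
  have "2 * mnorm1 X ^ 2 * mnorm1 R \<le> 2 * P\<^sup>2 * mnorm1 R"
    using X mnorm1_nonneg[of X] mnorm1_nonneg[of R] by (intro mult_right_mono mult_left_mono power_mono) auto
  with inverse_perturbation(2)[OF \<open>M ** X = mat 1\<close> small] R
  show "mnorm1 (matrix_inv (M + R) - X) \<le> 1" by (simp add: mult_ac)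
qed

section \<open>Asymptotics of \<open>\<Gamma>(\<lambda>)\<^sup>-\<^sup>1\<close>\<close>

lemma mnorm1_le_entry_bound:
  fixes A :: "'a::real_normed_vector^'n::finite^'m::finite"
  assumes "\<And>i j. norm (A $ i $ j) \<le> c"
  shows "mnorm1 A \<le> of_nat CARD('m) * of_nat CARD('n) * c"
proof -
  have "mnorm1 A \<le> (\<Sum>i\<in>(UNIV :: 'm set). \<Sum>j\<in>(UNIV :: 'n set). c)"
    unfolding mnorm1_def norm1_def by (intro sum_mono assms)
  then show ?thesis by simp
qed

lemma mnorm1_Gamma_mat_remainder_le:
  fixes \<alpha> :: "'n::finite \<Rightarrow> real"
  assumes y: "inj y" and lam: "lam \<noteq> 0"
    and \<rho>: "\<And>j k. dist (y j) (y k) \<le> \<rho>" and small: "norm lam * \<rho> \<le> 1"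
    and \<Lambda>: "\<And>j k. \<bar>ln (dist (y j) (y k))\<bar> \<le> \<Lambda>"
  shows "mnorm1 (Gamma_mat \<alpha> y lam - (\<chi> j k. Dtilde \<alpha> y $ j $ k - gfun lam))
           \<le> of_nat CARD('n) * of_nat CARD('n) * ((norm (gfun lam) + \<Lambda> + 1) * (norm lam * \<rho>)\<^sup>2)"
proof (rule mnorm1_le_entry_bound)
  fix j k
  have "0 \<le> \<Lambda>" using \<Lambda>[of j k] by linarith
  show "norm ((Gamma_mat \<alpha> y lam - (\<chi> j k. Dtilde \<alpha> y $ j $ k - gfun lam)) $ j $ k)
          \<le> (norm (gfun lam) + \<Lambda> + 1) * (norm lam * \<rho>)\<^sup>2"
  proof (cases "j = k")
    case True
    then show ?thesis using \<open>0 \<le> \<Lambda>\<close> by (simp add: Gamma_mat_def Dtilde_def)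
  next
    case False
    define x where "x = y j - y k"
    have "x \<noteq> 0" using False y by (simp add: x_def inj_eq)
    have dist: "dist (y j) (y k) = norm x" by (simp add: x_def dist_norm)
    have x_small: "norm lam * norm x \<le> norm lam * \<rho>" using \<rho>[of j k] by (simp add: dist mult_left_mono)
    have "norm ((Gamma_mat \<alpha> y lam - (\<chi> j k. Dtilde \<alpha> y $ j $ k - gfun lam)) $ j $ k)
        = norm (- greenG lam x - (of_real (ln (norm x) / (2 * pi)) - gfun lam))"
      using False by (simp add: Gamma_mat_def Dtilde_def x_def dist_norm)
    also have "\<dots> \<le> (norm (gfun lam) + \<bar>ln (norm x)\<bar> + 1) * (norm lam * norm x)\<^sup>2"
      using small x_small by (intro greenG_remainder_bound[OF lam \<open>x \<noteq> 0\<close>]) linarith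
    also have "\<dots> \<le> (norm (gfun lam) + \<Lambda> + 1) * (norm lam * \<rho>)\<^sup>2"
      using \<Lambda>[of j k] \<rho>[of j k] x_small \<open>0 \<le> \<Lambda>\<close> by (intro mult_mono power_mono) (auto simp: dist)
    finally show ?thesis .
  qed
qed

lemma Gamma_mat_remainder_weighted_le:
  fixes \<alpha> :: "'n::finite \<Rightarrow> real"
  assumes y: "inj y" and lam: "lam \<noteq> 0" and "0 \<le> a" "0 \<le> b"
    and \<rho>: "\<And>j k. dist (y j) (y k) \<le> \<rho>" "1 \<le> \<rho>" and small: "norm lam * \<rho> < 1"
    and \<Lambda>: "\<And>j k. \<bar>ln (dist (y j) (y k))\<bar> \<le> \<Lambda>"
  defines "N \<equiv> of_nat CARD('n) * of_nat CARD('n) :: real"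
    and "c \<equiv> a + 6 * b + \<Lambda> + 7"
  shows "mnorm1 (Gamma_mat \<alpha> y lam - (\<chi> j k. Dtilde \<alpha> y $ j $ k - gfun lam)) * (a + b * norm (gfun lam))\<^sup>2
           \<le> N * \<rho>\<^sup>2 * (1 + b)\<^sup>2 * ((c - ln (norm lam)) ^ 3 * norm lam ^ 2)"
proof -
  define t where "t = norm lam"
  have "0 < t" using lam by (simp add: t_def)
  have "t * 1 \<le> t * \<rho>" using \<open>0 < t\<close> \<rho>(2) by (intro mult_left_mono) auto
  then have "t < 1" using small by (simp add: t_def)
  then have "0 \<le> - ln t" using \<open>0 < t\<close> by simp
  have g: "norm (gfun lam) \<le> 6 - ln t"
    using norm_gfun_le[OF lam] \<open>0 < t\<close> \<open>t < 1\<close> by (simp add: t_def)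
  have "1 \<le> N"
    using mult_mono[of 1 "real CARD('n)" 1 "real CARD('n)"] by (simp add: N_def)
  have "0 \<le> \<Lambda>" using \<Lambda>[of undefined undefined] by linarith
  then have c: "a \<le> c - ln t" "6 - ln t \<le> c - ln t" "norm (gfun lam) + \<Lambda> + 1 \<le> c - ln t"
    using g \<open>0 \<le> - ln t\<close> \<open>0 \<le> a\<close> \<open>0 \<le> b\<close> by (auto simp: c_def)
  have "mnorm1 (Gamma_mat \<alpha> y lam - (\<chi> j k. Dtilde \<alpha> y $ j $ k - gfun lam))
      \<le> N * ((norm (gfun lam) + \<Lambda> + 1) * (t * \<rho>)\<^sup>2)"
    using mnorm1_Gamma_mat_remainder_le[OF y lam \<rho>(1) _ \<Lambda>] small by (simp add: N_def t_def)
  also have "\<dots> = N * \<rho>\<^sup>2 * ((norm (gfun lam) + \<Lambda> + 1) * t\<^sup>2)"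
    by (simp add: power_mult_distrib mult_ac)
  also have "\<dots> \<le> N * \<rho>\<^sup>2 * ((c - ln t) * t\<^sup>2)"
    using c(3) \<open>1 \<le> N\<close> by (intro mult_left_mono mult_right_mono) auto
  finally have R: "mnorm1 (Gamma_mat \<alpha> y lam - (\<chi> j k. Dtilde \<alpha> y $ j $ k - gfun lam))
      \<le> N * \<rho>\<^sup>2 * ((c - ln t) * t\<^sup>2)" .
  have "b * norm (gfun lam) \<le> b * (c - ln t)"
    using g c(2) \<open>0 \<le> b\<close> by (intro mult_left_mono) auto
  then have "a + b * norm (gfun lam) \<le> (1 + b) * (c - ln t)"
    using c(1) by (simp add: algebra_simps)
  then have P: "(a + b * norm (gfun lam))\<^sup>2 \<le> (1 + b)\<^sup>2 * (c - ln t)\<^sup>2"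
    using \<open>0 \<le> a\<close> \<open>0 \<le> b\<close> by (simp add: power_mult_distrib[symmetric] power_mono)
  have "mnorm1 (Gamma_mat \<alpha> y lam - (\<chi> j k. Dtilde \<alpha> y $ j $ k - gfun lam)) * (a + b * norm (gfun lam))\<^sup>2
      \<le> N * \<rho>\<^sup>2 * ((c - ln t) * t\<^sup>2) * ((1 + b)\<^sup>2 * (c - ln t)\<^sup>2)"
    by (rule mult_mono[OF R P]) (use \<open>1 \<le> N\<close> c \<open>0 \<le> a\<close> in auto)
  also have "\<dots> = N * \<rho>\<^sup>2 * (1 + b)\<^sup>2 * ((c - ln t) ^ 3 * t\<^sup>2)"
    by (simp add: power2_eq_square power3_eq_cube mult_ac)
  finally show ?thesis by (simp add: t_def)
qed

lemma Gamma_mat_remainder_small: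
  fixes \<alpha> :: "'n::finite \<Rightarrow> real"
  assumes y: "inj y" and "0 \<le> a" "0 \<le> b"
  obtains \<delta> where "\<delta> > 0" and "\<And>lam. lam \<noteq> 0 \<Longrightarrow> norm lam < \<delta> \<Longrightarrow>
    mnorm1 (Gamma_mat \<alpha> y lam - (\<chi> j k. Dtilde \<alpha> y $ j $ k - gfun lam)) * (a + b * norm (gfun lam))\<^sup>2 \<le> 1/2"
proof -
  define \<rho> where "\<rho> = 1 + (\<Sum>j\<in>UNIV. \<Sum>k\<in>UNIV. dist (y j) (y k))"
  define \<Lambda> where "\<Lambda> = (\<Sum>j\<in>UNIV. \<Sum>k\<in>UNIV. \<bar>ln (dist (y j) (y k))\<bar>)"
  define K where "K = of_nat CARD('n) * of_nat CARD('n) * \<rho>\<^sup>2 * (1 + b)\<^sup>2"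
  define c where "c = a + 6 * b + \<Lambda> + 7"
  have le_double_sum: "f j k \<le> (\<Sum>j\<in>UNIV. \<Sum>k\<in>UNIV. f j k)"
    if "\<And>j k. 0 \<le> f j k" for f :: "'n \<Rightarrow> 'n \<Rightarrow> real" and j k
  proof -
    have "f j k \<le> (\<Sum>k\<in>UNIV. f j k)" using that by (intro member_le_sum) auto
    also have "\<dots> \<le> (\<Sum>j\<in>UNIV. \<Sum>k\<in>UNIV. f j k)" using that by (intro member_le_sum sum_nonneg) auto
    finally show ?thesis .
  qed
  have "dist (y j) (y k) \<le> (\<Sum>j\<in>UNIV. \<Sum>k\<in>UNIV. dist (y j) (y k))" for j k
    by (rule le_double_sum) simp
  then have \<rho>: "dist (y j) (y k) \<le> \<rho>" "1 \<le> \<rho>" for j k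
    unfolding \<rho>_def by (smt (verit) sum_nonneg zero_le_dist)+
  have \<Lambda>: "\<bar>ln (dist (y j) (y k))\<bar> \<le> \<Lambda>" for j k
    using le_double_sum[of "\<lambda>j k. \<bar>ln (dist (y j) (y k))\<bar>"] by (simp add: \<Lambda>_def)
  have "K > 0" using \<rho>(2) \<open>0 \<le> b\<close> by (simp add: K_def)
  have "((\<lambda>t. (c - ln t) ^ 3 * t\<^sup>2) \<longlongrightarrow> 0) (at_right 0)" by real_asymp
  from order_tendstoD(2)[OF this, of "1 / (2 * K)"] \<open>K > 0\<close>
  obtain \<delta>0 where "\<delta>0 > 0" and \<delta>0: "\<And>t. 0 < t \<Longrightarrow> t < \<delta>0 \<Longrightarrow> (c - ln t) ^ 3 * t\<^sup>2 < 1 / (2 * K)"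
    unfolding eventually_at_right_field by auto
  show ?thesis
  proof (rule that[of "min \<delta>0 (1 / \<rho>)"])
    show "min \<delta>0 (1 / \<rho>) > 0" using \<open>\<delta>0 > 0\<close> \<rho> by simp
    fix lam :: complex assume "lam \<noteq> 0" and lam: "norm lam < min \<delta>0 (1 / \<rho>)"
    then have "norm lam * \<rho> < 1" using \<rho>(2) by (simp add: field_simps)
    from Gamma_mat_remainder_weighted_le[OF y \<open>lam \<noteq> 0\<close> \<open>0 \<le> a\<close> \<open>0 \<le> b\<close> \<rho> this \<Lambda>]
    have "mnorm1 (Gamma_mat \<alpha> y lam - (\<chi> j k. Dtilde \<alpha> y $ j $ k - gfun lam)) * (a + b * norm (gfun lam))\<^sup>2
        \<le> K * ((c - ln (norm lam)) ^ 3 * norm lam ^ 2)"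
      by (simp add: K_def c_def mult_ac)
    also have "\<dots> \<le> K * (1 / (2 * K))"
      using \<delta>0[of "norm lam"] \<open>lam \<noteq> 0\<close> lam \<open>K > 0\<close> by (intro mult_left_mono) auto
    finally show "mnorm1 (Gamma_mat \<alpha> y lam - (\<chi> j k. Dtilde \<alpha> y $ j $ k - gfun lam))
        * (a + b * norm (gfun lam))\<^sup>2 \<le> 1/2" using \<open>K > 0\<close> by simp
  qed
qed

lemma singular_SDS_structure:
  fixes D T :: "complex^'n::finite^'n"
  assumes sym: "\<And>i j. D $ i $ j = D $ j $ i" and real: "\<And>i j. cnj (D $ i $ j) = D $ i $ j"
    and singular: "\<exists>v\<in>mrange Smat. v \<noteq> 0 \<and> (Smat ** D ** Smat) *v v = 0"
    and T_proj: "is_orth_proj T {v \<in> mrange Smat. (Smat ** D ** Smat) *v v = 0}"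
    and nonsing: "\<forall>v\<in>mrange T. (T ** D ** D ** T) *v v = 0 \<longrightarrow> v = 0"
  obtains u B where "D ** B = mat 1" and "D *v u = 1" and "(\<Sum>i\<in>UNIV. u $ i) = 0" and "u \<noteq> 0"
    and "mrange T = {c *s u | c. True}"
    and "restr_inv T (D ** D) = (\<chi> i j. u $ i * u $ j / of_nat CARD('n))"
proof -
  define K where "K = {v \<in> mrange Smat. (Smat ** D ** Smat) *v v = 0}"
  have mT: "mrange T = K" unfolding K_def by (rule is_orth_proj_mrange[OF T_proj])
  have nondeg: "v = 0" if "v \<in> K" and "D *v (D *v v) = 0" for v
  proof -
    have "T *v v = v" using T_proj that(1) unfolding is_orth_proj_def K_def by blast
    then have "(T ** D ** D ** T) *v v = T *v (D *v (D *v v))"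
      by (simp add: matrix_vector_mul_assoc[symmetric])
    then show ?thesis using nonsing that mT by auto
  qed
  obtain u where Du: "D *v u = 1" and Ku: "K = {c *s u | c. True}" and "invertible D"
    using SDS_kernel_line[OF sym, folded K_def] singular nondeg unfolding K_def by blast
  have "u \<noteq> 0"
  proof
    assume "u = 0"
    then have "(1 :: complex^'n) $ undefined = 0" using Du by simp
    then show False by simp
  qed
  have "u \<in> K" unfolding Ku by (rule CollectI, rule exI[of _ 1]) simp
  then have "(\<Sum>i\<in>UNIV. u $ i) = 0" unfolding K_def SDS_kernel_iff by blast
  moreover obtain B where "D ** B = mat 1" using \<open>invertible D\<close> unfolding invertible_def by blast
  moreover have "restr_inv T (D ** D) = (\<chi> i j. u $ i * u $ j / of_nat CARD('n))"
    using T_proj Ku \<open>u \<noteq> 0\<close>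
    by (intro restr_inv_rank_one[OF sym Du real_solution_of_real_system[OF real \<open>invertible D\<close> _ Du]
          \<open>u \<noteq> 0\<close> is_orth_proj_line]) (auto simp: K_def)
  ultimately show ?thesis using that Du \<open>u \<noteq> 0\<close> mT Ku by blast
qed

lemma Gamma_mat_inverse_approx:
  fixes \<alpha> :: "'n::finite \<Rightarrow> real" and B :: "complex^'n^'n"
  assumes y: "inj y" and DB: "Dtilde \<alpha> y ** B = mat 1" and Du: "Dtilde \<alpha> y *v u = 1"
    and sum_u: "(\<Sum>i\<in>UNIV. u $ i) = 0"
  obtains \<delta> where "\<delta> > 0" and "\<And>lam. lam \<noteq> 0 \<Longrightarrow> norm lam < \<delta> \<Longrightarrow> invertible (Gamma_mat \<alpha> y lam)
    \<and> mnorm1 (matrix_inv (Gamma_mat \<alpha> y lam) - (\<chi> i j. B $ i $ j + gfun lam * (u $ i * u $ j))) \<le> 1"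
proof -
  define a where "a = 1 + mnorm1 B"
  define b where "b = mnorm1 (\<chi> i j. u $ i * u $ j :: complex^'n^'n)"
  have "0 \<le> a" "0 \<le> b" by (simp_all add: a_def b_def mnorm1_nonneg add_nonneg_nonneg)
  obtain \<delta> where "\<delta> > 0" and small: "\<And>lam. lam \<noteq> 0 \<Longrightarrow> norm lam < \<delta> \<Longrightarrow>
    mnorm1 (Gamma_mat \<alpha> y lam - (\<chi> j k. Dtilde \<alpha> y $ j $ k - gfun lam)) * (a + b * norm (gfun lam))\<^sup>2 \<le> 1/2"
    using Gamma_mat_remainder_small[OF y \<open>0 \<le> a\<close> \<open>0 \<le> b\<close>] by blast
  have sym: "\<And>i j. Dtilde \<alpha> y $ i $ j = Dtilde \<alpha> y $ j $ i" by (simp add: Dtilde_def dist_commute)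
  show ?thesis
  proof (rule that[OF \<open>\<delta> > 0\<close>])
    fix lam :: complex assume "lam \<noteq> 0" "norm lam < \<delta>"
    define M where "M = (\<chi> j k. Dtilde \<alpha> y $ j $ k - gfun lam)"
    define X :: "complex^'n^'n" where "X = (\<chi> i j. B $ i $ j + gfun lam * (u $ i * u $ j))"
    have MX: "M ** X = mat 1" unfolding M_def X_def by (rule rank_one_update_inverse[OF DB sym Du sum_u])
    have "X = B + (\<chi> i j. gfun lam * (u $ i * u $ j))" by (simp add: X_def vec_eq_iff)
    then have "mnorm1 X \<le> mnorm1 B + mnorm1 (\<chi> i j. gfun lam * (u $ i * u $ j) :: complex^'n^'n)"
      using mnorm1_add_le by metis
    also have "\<dots> = mnorm1 B + norm (gfun lam) * b"
      by (simp add: b_def mnorm1_def norm1_def norm_mult sum_distrib_left)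
    finally have "mnorm1 X \<le> a + b * norm (gfun lam)" by (simp add: a_def mult.commute)
    moreover have "1 \<le> a + b * norm (gfun lam)"
      using \<open>0 \<le> b\<close> by (simp add: a_def mnorm1_nonneg add_increasing2)
    ultimately have "invertible (M + (Gamma_mat \<alpha> y lam - M))
        \<and> mnorm1 (matrix_inv (M + (Gamma_mat \<alpha> y lam - M)) - X) \<le> 1"
      using inverse_perturbation_bounded[OF MX] small[OF \<open>lam \<noteq> 0\<close> \<open>norm lam < \<delta>\<close>]
      unfolding M_def by blast
    then show "invertible (Gamma_mat \<alpha> y lam)
        \<and> mnorm1 (matrix_inv (Gamma_mat \<alpha> y lam) - (\<chi> i j. B $ i $ j + gfun lam * (u $ i * u $ j))) \<le> 1"
      by (simp add: X_def)
  qed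
qed

theorem mainTheorem10:
  fixes \<alpha> :: "'n::finite \<Rightarrow> real" and y :: "'n \<Rightarrow> real^2" and T :: "complex^'n^'n"
  assumes distinct: "inj y"
    and singular: "\<exists>v\<in>mrange Smat. v \<noteq> 0 \<and> (Smat ** Dtilde \<alpha> y ** Smat) *v v = 0"
    and T_proj: "is_orth_proj T {v \<in> mrange Smat. (Smat ** Dtilde \<alpha> y ** Smat) *v v = 0}"
    and nonsing: "\<forall>v\<in>mrange T. (T ** Dtilde \<alpha> y ** Dtilde \<alpha> y ** T) *v v = 0 \<longrightarrow> v = 0"
  shows "(\<exists>u. u \<noteq> 0 \<and> mrange T = {c *s u | c. True})
    \<and> (\<exists>C \<delta>. \<delta> > 0 \<and> (\<forall>lam. Im lam \<ge> 0 \<and> lam \<noteq> 0 \<and> norm lam < \<delta> \<longrightarrow>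
          invertible (Gamma_mat \<alpha> y lam) \<and>
          norm (matrix_inv (Gamma_mat \<alpha> y lam)
                - (\<chi> i j. of_nat CARD('n) * gfun lam *
                     restr_inv T (Dtilde \<alpha> y ** Dtilde \<alpha> y) $ i $ j)) \<le> C))"
proof -
  have sym: "\<And>i j. Dtilde \<alpha> y $ i $ j = Dtilde \<alpha> y $ j $ i"
    and real: "\<And>i j. cnj (Dtilde \<alpha> y $ i $ j) = Dtilde \<alpha> y $ i $ j"
    by (simp_all add: Dtilde_def dist_commute)
  obtain u B where DB: "Dtilde \<alpha> y ** B = mat 1" and Du: "Dtilde \<alpha> y *v u = 1"
    and sum_u: "(\<Sum>i\<in>UNIV. u $ i) = 0" and "u \<noteq> 0" and line: "mrange T = {c *s u | c. True}"
    and restr: "restr_inv T (Dtilde \<alpha> y ** Dtilde \<alpha> y) = (\<chi> i j. u $ i * u $ j / of_nat CARD('n))"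
    using singular_SDS_structure[OF sym real singular T_proj nonsing] by blast
  obtain \<delta> where "\<delta> > 0" and near: "\<And>lam. lam \<noteq> 0 \<Longrightarrow> norm lam < \<delta> \<Longrightarrow> invertible (Gamma_mat \<alpha> y lam)
    \<and> mnorm1 (matrix_inv (Gamma_mat \<alpha> y lam) - (\<chi> i j. B $ i $ j + gfun lam * (u $ i * u $ j))) \<le> 1"
    using Gamma_mat_inverse_approx[OF distinct DB Du sum_u] by blast
  have "norm (matrix_inv (Gamma_mat \<alpha> y lam) - (\<chi> i j. of_nat CARD('n) * gfun lam *
          restr_inv T (Dtilde \<alpha> y ** Dtilde \<alpha> y) $ i $ j)) \<le> 1 + mnorm1 B"
    if "lam \<noteq> 0" "norm lam < \<delta>" for lam
  proof -
    have "matrix_inv (Gamma_mat \<alpha> y lam) - (\<chi> i j. of_nat CARD('n) * gfun lam *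
            restr_inv T (Dtilde \<alpha> y ** Dtilde \<alpha> y) $ i $ j)
        = (matrix_inv (Gamma_mat \<alpha> y lam) - (\<chi> i j. B $ i $ j + gfun lam * (u $ i * u $ j))) + B"
      by (simp add: restr vec_eq_iff)
    then show ?thesis
      using near[OF that] mnorm1_add_le norm_le_mnorm1 by (smt (verit))
  qed
  then show ?thesis using line \<open>u \<noteq> 0\<close> \<open>\<delta> > 0\<close> near by blast
qed

end
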